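(* For each fixed $\kappa\in(1/2,1)$, let $\lambda^+_{c,\kappa}(\mathcal K,\mathcal L)$ be the supremum of all $\lambda$ for which there is a constant $C=C(\lambda,\kappa)$ such that for all $t_0\in\mathbb R$, $R>0$ and all $u\in\mathcal V_{\rm loc}(\mathcal Q^K_R(0;t_0))$ satisfying $\mathcal Lu=0$ in $\mathcal Q^K_R(0;t_0)$ and $u=0$ for $x\in\partial\mathcal K$, $$|u(x;t)|\le C\Big(\frac{|x'|}{R}\Big)^\lambda\sup_{\mathcal Q^K_{\kappa R}(0;t_0)}|u|\qquad\text{for }(x;t)\in\mathcal Q^K_{R/2}(0;t_0).$$ Then $\lambda^+_{c,\kappa}(\mathcal K,\mathcal L)$ does not depend on $\kappa\in(1/2,1)$. The same holds with $\mathcal L$ replaced by $\widehat{\mathcal L}$; hence the critical exponents $\lambda_c^\pm(\mathcal K,\mathcal L)$ do not depend on the choice of $\kappa$.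
   Context: Let $2\le m\le n$, $x=(x',x'')$ with $x'\in\mathbb R^m$, $x''\in\mathbb R^{n-m}$. $K\subset\mathbb R^m$ is an open cone with $\omega=K\cap\mathbb S^{m-1}$ of class $C^{1,1}$, $\mathcal K=K\times\mathbb R^{n-m}$. $A_{ij}(t)$ are real measurable symmetric coefficients with $\nu|\xi|^2\le A_{ij}(t)\xi_i\xi_j\le\nu^{-1}|\xi|^2$, $\nu>0$; $\mathcal Lu=\partial_tu-A_{ij}(t)D_iD_ju$, $\widehat{\mathcal L}u=\partial_tu-A_{ij}(-t)D_iD_ju$. $\mathcal Q^K_R(x_0;t_0)=\big((B^m_R(x_0')\cap K)\times B^{n-m}_R(x_0'')\big)\times(t_0-R^2,t_0]$. $\mathcal V(\mathcal Q)$: functions with finite $\sup_\tau\|u(\cdot,\tau)\|_{L_2}+\|Du\|_{L_2(\mathcal Q)}$; $\mathcal V_{\rm loc}(\mathcal Q^K_R(x_0;t_0))$: functions in $\mathcal V(\mathcal Q^K_{R'}(x_0;t_0))$ for every $R'<R$. The critical exponent $\lambda_c^+(\mathcal K,\mathcal L)$ is defined as the supremum of $\lambda$ for which the displayed estimate holds for some $\kappa\in(1/2,1)$, and $\lambda_c^-(\mathcal K,\mathcal L)=\lambda_c^+(\mathcal K,\widehat{\mathcal L})$. *)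

theory Defs
  imports "HOL-Analysis.Analysis" "HOL-Probability.Essential_Supremum"
begin

text \<open>Space R^n is real^'n; the index set I (card I = m) singles out the
  coordinates x' in R^m, the remaining ones give x'' in R^(n-m).
  R^m is identified with the coordinate subspace subsp I.\<close>

definition xp :: "'n set \<Rightarrow> real^'n \<Rightarrow> real^'n" where
  "xp I x = (\<chi> i. if i \<in> I then x $ i else 0)"

definition xpp :: "'n set \<Rightarrow> real^'n \<Rightarrow> real^'n" where
  "xpp I x = (\<chi> i. if i \<in> I then 0 else x $ i)"

definition subsp :: "'n set \<Rightarrow> (real^'n) set" where
  "subsp I = {y. \<forall>i. i \<notin> I \<longrightarrow> y $ i = 0}"

definition open_cone :: "'n set \<Rightarrow> (real^'n) set \<Rightarrow> bool" where
  "open_cone I K \<longleftrightarrow> K \<noteq> {} \<and> K \<subseteq> subsp I \<and> openin (top_of_set (subsp I)) K \<and>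
     (\<forall>y\<in>K. \<forall>c>0. c *\<^sub>R y \<in> K)"

text \<open>omega = K \<inter> S^(m-1) is of class C^{1,1}: equivalently (K being a cone),
  near every boundary point p \<noteq> 0 of K (relative to R^m), K is given by
  {rho < 0} for a C^{1,1} defining function rho whose gradient, projected on
  R^m, does not vanish.\<close>
definition C11_cone :: "'n set \<Rightarrow> (real^'n) set \<Rightarrow> bool" where
  "C11_cone I K \<longleftrightarrow> (\<forall>p. p \<in> closure K - K \<and> p \<noteq> 0 \<longrightarrow>
     (\<exists>r>0. \<exists>(\<rho>::real^'n \<Rightarrow> real) g L.
        (\<forall>y\<in>ball p r. (\<rho> has_derivative (\<lambda>v. g y \<bullet> v)) (at y)) \<and>
        (\<forall>y\<in>ball p r. \<forall>z\<in>ball p r. norm (g y - g z) \<le> L * dist y z) \<and>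
        (\<exists>v\<in>subsp I. g p \<bullet> v \<noteq> 0) \<and>
        K \<inter> ball p r = {y \<in> subsp I \<inter> ball p r. \<rho> y < 0}))"

definition coeff_ok :: "real \<Rightarrow> (real \<Rightarrow> real^'n^'n) \<Rightarrow> bool" where
  "coeff_ok \<nu> A \<longleftrightarrow> 0 < \<nu> \<and>
     (\<forall>i j. (\<lambda>t. A t $ i $ j) \<in> borel_measurable lebesgue) \<and>
     (\<forall>t. transpose (A t) = A t) \<and>
     (\<forall>t \<xi>. \<nu> * (norm \<xi>)\<^sup>2 \<le> \<xi> \<bullet> (A t *v \<xi>) \<and> \<xi> \<bullet> (A t *v \<xi>) \<le> (1/\<nu>) * (norm \<xi>)\<^sup>2)"

definition cylK :: "'n set \<Rightarrow> (real^'n) set \<Rightarrow> real \<Rightarrow> real \<Rightarrow> ((real^'n) \<times> real) set" where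
  "cylK I K R t0 = {(x,t). xp I x \<in> K \<and> norm (xp I x) < R \<and> norm (xpp I x) < R \<and>
                          t0 - R\<^sup>2 < t \<and> t \<le> t0}"

definition cylF :: "'n set \<Rightarrow> real \<Rightarrow> real \<Rightarrow> ((real^'n) \<times> real) set" where
  "cylF I R t0 = {(x,t). norm (xp I x) < R \<and> norm (xpp I x) < R \<and> t0 - R\<^sup>2 < t \<and> t \<le> t0}"

definition test_fun :: "((real^'n) \<times> real) set \<Rightarrow> ((real^'n) \<times> real \<Rightarrow> real)
     \<Rightarrow> ((real^'n) \<times> real \<Rightarrow> (real^'n) \<times> real) \<Rightarrow> bool" where
  "test_fun U \<phi> g \<longleftrightarrow> (\<forall>z. (\<phi> has_derivative (\<lambda>h. g z \<bullet> h)) (at z)) \<and> continuous_on UNIV g \<and>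
     compact (closure {z. \<phi> z \<noteq> 0}) \<and> closure {z. \<phi> z \<noteq> 0} \<subseteq> U"

definition weak_grad :: "((real^'n) \<times> real) set \<Rightarrow> ((real^'n) \<times> real \<Rightarrow> real)
     \<Rightarrow> ((real^'n) \<times> real \<Rightarrow> real^'n) \<Rightarrow> bool" where
  "weak_grad Q u Du \<longleftrightarrow> (\<forall>\<phi> g. test_fun (interior Q) \<phi> g \<longrightarrow>
     (\<forall>i. set_lebesgue_integral lebesgue Q (\<lambda>z. u z * (fst (g z)) $ i) =
          - set_lebesgue_integral lebesgue Q (\<lambda>z. (Du z) $ i * \<phi> z)))"

text \<open>The energy space V(Q): sup_tau ||u(.,tau)||_L2 < \<infinity> (essential sup in tau)
  and Du \<in> L2(Q).\<close>
definition Vspace :: "((real^'n) \<times> real) set \<Rightarrow> ((real^'n) \<times> real \<Rightarrow> real)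
     \<Rightarrow> ((real^'n) \<times> real \<Rightarrow> real^'n) \<Rightarrow> bool" where
  "Vspace Q u Du \<longleftrightarrow> set_borel_measurable lebesgue Q u \<and> set_borel_measurable lebesgue Q Du \<and>
     set_integrable lebesgue Q (\<lambda>z. (norm (Du z))\<^sup>2) \<and>
     (\<exists>M. AE \<tau> in lborel. set_integrable lebesgue {x. (x,\<tau>) \<in> Q} (\<lambda>x. (u (x,\<tau>))\<^sup>2) \<and>
            set_lebesgue_integral lebesgue {x. (x,\<tau>) \<in> Q} (\<lambda>x. (u (x,\<tau>))\<^sup>2) \<le> M) \<and>
     weak_grad Q u Du"

text \<open>u \<in> V_loc(Q^K_R(0;t0)) with weak gradient Du, u = 0 on the lateral boundary
  x \<in> \<partial>\<K> (its zero extension outside \<K> stays in V), and Lu = 0 weakly in Q^K_R(0;t0).\<close>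
definition sol :: "'n set \<Rightarrow> (real^'n) set \<Rightarrow> (real \<Rightarrow> real^'n^'n) \<Rightarrow> real \<Rightarrow> real
     \<Rightarrow> ((real^'n) \<times> real \<Rightarrow> real) \<Rightarrow> ((real^'n) \<times> real \<Rightarrow> real^'n) \<Rightarrow> bool" where
  "sol I K A R t0 u Du \<longleftrightarrow>
     (\<forall>R'. 0 < R' \<and> R' < R \<longrightarrow>
        Vspace (cylK I K R' t0) u Du \<and>
        Vspace (cylF I R' t0) (\<lambda>z. if xp I (fst z) \<in> K then u z else 0)
                              (\<lambda>z. if xp I (fst z) \<in> K then Du z else 0)) \<and>
     (\<forall>\<phi> g. test_fun (interior (cylK I K R t0)) \<phi> g \<longrightarrow>
        set_lebesgue_integral lebesgue (cylK I K R t0)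
          (\<lambda>z. - u z * snd (g z) + (A (snd z) *v Du z) \<bullet> fst (g z)) = 0)"

definition holds_est :: "'n set \<Rightarrow> (real^'n) set \<Rightarrow> (real \<Rightarrow> real^'n^'n) \<Rightarrow> real \<Rightarrow> real \<Rightarrow> bool" where
  "holds_est I K A \<kappa> lam \<longleftrightarrow> (\<exists>C. \<forall>t0 R u Du. 0 < R \<and> sol I K A R t0 u Du \<longrightarrow>
     (AE z in lebesgue. z \<in> cylK I K (R/2) t0 \<longrightarrow>
        ereal \<bar>u z\<bar> \<le> ereal (C * (norm (xp I (fst z)) / R) powr lam) *
          esssup lebesgue (\<lambda>w. if w \<in> cylK I K (\<kappa> * R) t0 then ereal \<bar>u w\<bar> else 0)))"

definition lambda_c_kappa :: "'n set \<Rightarrow> (real^'n) set \<Rightarrow> (real \<Rightarrow> real^'n^'n) \<Rightarrow> real \<Rightarrow> ereal" where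
  "lambda_c_kappa I K A \<kappa> = Sup {ereal lam | lam. holds_est I K A \<kappa> lam}"

end

theory Submission
  imports Defs
begin

text \<open>
  Assume the estimate with parameter \<open>\<kappa>2 \<in> (0,1)\<close>, let \<open>1/2 < \<kappa>1 < 1\<close> and put \<open>\<rho> = c R\<close> with
  \<open>c = (\<kappa>1 - 1/2) / 2\<close>. At points of \<open>Q_{R/2}\<close> with \<open>|x'| \<ge> \<rho>/2\<close> the weight \<open>(|x'|/R)^\<lambda>\<close> is
  bounded below, so the trivial bound of \<open>|u|\<close> by its essential supremum over \<open>Q_{\<kappa>1 R}\<close>
  suffices. A point with \<open>|x'| < \<rho>/2\<close> lies in the half-size cylinder of some
  \<open>Q_\<rho>(0, y''; s) \<subseteq> Q_{\<kappa>1 R}\<close>. Since the coefficients depend on \<open>t\<close> only, the problem is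
  invariant under translations in \<open>x''\<close>, and the \<open>\<kappa>2\<close>-estimate in \<open>Q_\<rho>(0, y''; s)\<close> gives
  \<open>|u| \<le> C (|x'|/\<rho>)^\<lambda> ess sup_{Q_{\<kappa>1 R}} |u|\<close>. All estimates hold only almost
  everywhere, so the centres \<open>(y'', s)\<close> range over a countable dense set.
\<close>

section \<open>Translation invariance of Lebesgue measure\<close>

lemma lebesgue_translate_measurable:
  "(\<lambda>x. x + c) \<in> (lebesgue::'a::euclidean_space measure) \<rightarrow>\<^sub>M lebesgue"
  using lebesgue_affine_measurable[where c="\<lambda>_::'a. 1" and t=c]
  by (simp add: euclidean_representation add.commute)

lemma distr_lebesgue_translate:
  "distr lebesgue lebesgue (\<lambda>x. x + c) = (lebesgue::'a::euclidean_space measure)"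
  using lebesgue_affine_euclidean[where c="\<lambda>_::'a. 1" and t=c]
  by (simp add: euclidean_representation add.commute density_1)

lemma AE_lebesgue_translate:
  fixes c :: "'a::euclidean_space"
  assumes "AE x in lebesgue. P x"
  shows "AE x in lebesgue. P (x + c)"
proof -
  from assms obtain N where N: "{x\<in>space lebesgue. \<not> P x} \<subseteq> N"
    "emeasure lebesgue N = 0" "N \<in> sets lebesgue"
    by (auto elim!: AE_E)
  have "emeasure lebesgue ((\<lambda>x. x + c) -` N) = emeasure (distr lebesgue lebesgue (\<lambda>x. x + c)) N"
    using emeasure_distr[OF lebesgue_translate_measurable N(3)] by simp
  also have "\<dots> = 0"
    using N(2) by (simp add: distr_lebesgue_translate)
  finally show ?thesis
    using measurable_sets[OF lebesgue_translate_measurable N(3)] N(1)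
    by (intro AE_I[where N="(\<lambda>x. x + c) -` N"]) auto
qed

lemma borel_measurable_lebesgue_translate:
  fixes c :: "'a::euclidean_space"
  assumes "f \<in> borel_measurable lebesgue"
  shows "(\<lambda>x. f (x + c)) \<in> borel_measurable lebesgue"
  using measurable_compose[OF lebesgue_translate_measurable assms] by simp

lemma integrable_lebesgue_translate:
  fixes c :: "'a::euclidean_space" and f :: "'a \<Rightarrow> 'b::{banach, second_countable_topology}"
  assumes "integrable lebesgue f"
  shows "integrable lebesgue (\<lambda>x. f (x + c))"
  using assms integrable_distr_eq[OF lebesgue_translate_measurable, of f c]
  by (simp add: distr_lebesgue_translate)

lemma integrable_lebesgue_translate_iff:
  fixes c :: "'a::euclidean_space" and f :: "'a \<Rightarrow> 'b::{banach, second_countable_topology}"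
  shows "integrable lebesgue (\<lambda>x. f (x + c)) \<longleftrightarrow> integrable lebesgue f"
  using integrable_lebesgue_translate[of f c]
    integrable_lebesgue_translate[of "\<lambda>x. f (x + c)" "-c"]
  by auto

lemma integral_lebesgue_translate:
  fixes c :: "'a::euclidean_space" and f :: "'a \<Rightarrow> 'b::{banach, second_countable_topology}"
  shows "integral\<^sup>L lebesgue (\<lambda>x. f (x + c)) = integral\<^sup>L lebesgue f"
proof (cases "integrable lebesgue f")
  case True
  then show ?thesis
    using integral_distr[OF lebesgue_translate_measurable, of f c]
    by (simp add: distr_lebesgue_translate)
next
  case False
  then show ?thesis
    by (simp add: integrable_lebesgue_translate_iff not_integrable_integral_eq)
qed

lemma set_integral_lebesgue_translate:
  fixes c :: "'a::euclidean_space" and F :: "'a \<Rightarrow> real"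
  shows "set_lebesgue_integral lebesgue ((\<lambda>z. z + c) -` S) (\<lambda>z. F (z + c)) =
    set_lebesgue_integral lebesgue S F"
  unfolding set_lebesgue_integral_def
  using integral_lebesgue_translate[of "\<lambda>z. indicator S z *\<^sub>R F z" c]
  by (simp add: indicator_def)

lemma set_integrable_lebesgue_translate_iff:
  fixes c :: "'a::euclidean_space" and F :: "'a \<Rightarrow> 'b::{banach, second_countable_topology}"
  shows "set_integrable lebesgue ((\<lambda>z. z + c) -` S) (\<lambda>z. F (z + c)) \<longleftrightarrow>
    set_integrable lebesgue S F"
  unfolding set_integrable_def
  using integrable_lebesgue_translate_iff[of "\<lambda>z. indicator S z *\<^sub>R F z" c]
  by (simp add: indicator_def)

lemma set_borel_measurable_lebesgue_translate:
  fixes c :: "'a::euclidean_space" and F :: "'a \<Rightarrow> 'b::{banach, second_countable_topology}"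
  assumes "set_borel_measurable lebesgue S F"
  shows "set_borel_measurable lebesgue ((\<lambda>z. z + c) -` S) (\<lambda>z. F (z + c))"
  using borel_measurable_lebesgue_translate[OF assms[unfolded set_borel_measurable_def], of c]
  unfolding set_borel_measurable_def by (simp add: indicator_def)

lemma translate_vimage_eq_image:
  fixes c :: "'a::ab_group_add"
  shows "(\<lambda>z. z + c) -` S = (+) (-c) ` S"
  by (force simp: image_iff intro: exI[where x="_ + c"])

section \<open>Test functions, weak gradients and the energy space\<close>

lemma set_integral_cong_support:
  fixes F :: "'a::euclidean_space \<Rightarrow> real"
  assumes "\<And>z. z \<notin> C \<Longrightarrow> F z = 0" "C \<subseteq> S1" "C \<subseteq> S2"
  shows "set_lebesgue_integral lebesgue S1 F = set_lebesgue_integral lebesgue S2 F"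
  unfolding set_lebesgue_integral_def
  by (rule arg_cong[where f="integral\<^sup>L lebesgue"])
     (use assms in \<open>force simp: indicator_def\<close>)

lemma test_fun_mono: "test_fun U \<phi> g \<Longrightarrow> U \<subseteq> V \<Longrightarrow> test_fun V \<phi> g"
  by (auto simp: test_fun_def)

lemma test_fun_translate:
  fixes c :: "(real^'n) \<times> real"
  assumes "test_fun U \<phi> g"
  shows "test_fun ((\<lambda>z. z + c) -` U) (\<lambda>z. \<phi> (z + c)) (\<lambda>z. g (z + c))"
proof -
  have d: "\<And>z. (\<phi> has_derivative (\<lambda>h. g z \<bullet> h)) (at z)" and cg: "continuous_on UNIV g"
    and cp: "compact (closure {z. \<phi> z \<noteq> 0})" and sub: "closure {z. \<phi> z \<noteq> 0} \<subseteq> U"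
    using assms by (auto simp: test_fun_def)
  have D: "((\<lambda>z. \<phi> (z + c)) has_derivative (\<lambda>h. g (z + c) \<bullet> h)) (at z)" for z
  proof -
    have "((\<lambda>z. z + c) has_derivative (\<lambda>h. h)) (at z)"
      by (auto intro!: derivative_eq_intros)
    from has_derivative_compose[OF this d[of "z + c"]] show ?thesis
      by (simp add: o_def)
  qed
  have C: "continuous_on UNIV (\<lambda>z. g (z + c))"
    by (rule continuous_on_compose2[OF cg]) (auto intro: continuous_intros)
  have "{z. \<phi> (z + c) \<noteq> 0} = (+) (-c) ` {z. \<phi> z \<noteq> 0}"
    using translate_vimage_eq_image[of c "{z. \<phi> z \<noteq> 0}"] by (simp add: vimage_def)
  then have supp: "closure {z. \<phi> (z + c) \<noteq> 0} = (+) (-c) ` closure {z. \<phi> z \<noteq> 0}"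
    by (simp only: closure_translation)
  have P: "compact (closure {z. \<phi> (z + c) \<noteq> 0})"
    unfolding supp by (rule compact_translation[OF cp])
  have S: "closure {z. \<phi> (z + c) \<noteq> 0} \<subseteq> (\<lambda>z. z + c) -` U"
    unfolding supp translate_vimage_eq_image using sub by (rule image_mono)
  show ?thesis
    unfolding test_fun_def using D C P S by (intro conjI allI) assumption+
qed

lemma eq_0_outside_closure_support:
  assumes "z \<notin> closure {z. \<phi> z \<noteq> 0}"
  shows "\<phi> z = (0::real)"
  using assms closure_subset by (meson mem_Collect_eq subsetD)

lemma test_fun_grad_eq_0:
  assumes "test_fun U \<phi> g" "z \<notin> closure {z. \<phi> z \<noteq> 0}"
  shows "g z = 0"
proof -
  have d: "(\<phi> has_derivative (\<lambda>h. g z \<bullet> h)) (at z)"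
    using assms(1) unfolding test_fun_def by blast
  have "((\<lambda>_. 0) has_derivative (\<lambda>h. 0)) (at z)"
    by simp
  then have "(\<phi> has_derivative (\<lambda>h. 0)) (at z)"
  proof (rule has_derivative_transform_within_open[where s="- closure {z. \<phi> z \<noteq> 0}"])
    fix x
    assume "x \<in> - closure {z. \<phi> z \<noteq> 0}"
    then show "0 = \<phi> x"
      by (intro eq_0_outside_closure_support[symmetric]) simp
  qed (simp_all add: open_Compl assms(2))
  from has_derivative_unique[OF d this] have "g z \<bullet> g z = 0"
    by (rule fun_cong)
  then show ?thesis
    by simp
qed

lemma weak_grad_translate:
  fixes w :: "(real^'n) \<times> real"
  assumes "weak_grad Q u Du"
  shows "weak_grad ((\<lambda>z. z + w) -` Q) (\<lambda>z. u (z + w)) (\<lambda>z. Du (z + w))"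
  unfolding weak_grad_def
proof (intro allI impI)
  fix \<phi> g i
  assume t: "test_fun (interior ((\<lambda>z. z + w) -` Q)) \<phi> g"
  have "interior ((\<lambda>z. z + w) -` Q) = (\<lambda>z. z + w) -` interior Q"
    unfolding translate_vimage_eq_image by (rule interior_translation)
  then have "test_fun (interior Q) (\<lambda>z. \<phi> (z - w)) (\<lambda>z. g (z - w))"
    using test_fun_translate[OF t, of "-w"] by (simp add: vimage_def)
  then have "set_lebesgue_integral lebesgue Q (\<lambda>z. u z * fst (g (z - w)) $ i) =
      - set_lebesgue_integral lebesgue Q (\<lambda>z. Du z $ i * \<phi> (z - w))"
    using assms unfolding weak_grad_def by blast
  moreover have "set_lebesgue_integral lebesgue ((\<lambda>z. z + w) -` Q) (\<lambda>z. u (z + w) * fst (g z) $ i) =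
      set_lebesgue_integral lebesgue Q (\<lambda>z. u z * fst (g (z - w)) $ i)"
    using set_integral_lebesgue_translate[of w Q "\<lambda>z. u z * fst (g (z - w)) $ i"] by simp
  moreover have "set_lebesgue_integral lebesgue ((\<lambda>z. z + w) -` Q) (\<lambda>z. Du (z + w) $ i * \<phi> z) =
      set_lebesgue_integral lebesgue Q (\<lambda>z. Du z $ i * \<phi> (z - w))"
    using set_integral_lebesgue_translate[of w Q "\<lambda>z. Du z $ i * \<phi> (z - w)"] by simp
  ultimately show "set_lebesgue_integral lebesgue ((\<lambda>z. z + w) -` Q) (\<lambda>z. u (z + w) * fst (g z) $ i) =
      - set_lebesgue_integral lebesgue ((\<lambda>z. z + w) -` Q) (\<lambda>z. Du (z + w) $ i * \<phi> z)"
    by simp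
qed

lemma weak_grad_subset:
  assumes "weak_grad Q u Du" "Q' \<subseteq> Q"
  shows "weak_grad Q' u Du"
  unfolding weak_grad_def
proof (intro allI impI)
  fix \<phi> g i
  assume t: "test_fun (interior Q') \<phi> g"
  let ?C = "closure {z. \<phi> z \<noteq> 0}"
  have "test_fun (interior Q) \<phi> g"
    using t interior_mono[OF assms(2)] by (rule test_fun_mono)
  then have e: "set_lebesgue_integral lebesgue Q (\<lambda>z. u z * fst (g z) $ i) =
      - set_lebesgue_integral lebesgue Q (\<lambda>z. Du z $ i * \<phi> z)"
    using assms(1) unfolding weak_grad_def by blast
  have C: "?C \<subseteq> Q'"
    using t interior_subset unfolding test_fun_def by blast
  have "set_lebesgue_integral lebesgue Q' (\<lambda>z. u z * fst (g z) $ i) =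
      set_lebesgue_integral lebesgue Q (\<lambda>z. u z * fst (g z) $ i)"
    by (rule set_integral_cong_support[where C="?C"])
       (use C assms(2) test_fun_grad_eq_0[OF t] in auto)
  moreover have "set_lebesgue_integral lebesgue Q' (\<lambda>z. Du z $ i * \<phi> z) =
      set_lebesgue_integral lebesgue Q (\<lambda>z. Du z $ i * \<phi> z)"
    by (rule set_integral_cong_support[where C="?C"])
       (use C assms(2) eq_0_outside_closure_support in auto)
  ultimately show "set_lebesgue_integral lebesgue Q' (\<lambda>z. u z * fst (g z) $ i) =
      - set_lebesgue_integral lebesgue Q' (\<lambda>z. Du z $ i * \<phi> z)"
    using e by simp
qed

lemma Vspace_translate:
  fixes w :: "(real^'n) \<times> real"
  assumes V: "Vspace Q u Du" and w: "snd w = 0"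
  shows "Vspace ((\<lambda>z. z + w) -` Q) (\<lambda>z. u (z + w)) (\<lambda>z. Du (z + w))"
proof -
  have slice: "{x. (x, \<tau>) \<in> (\<lambda>z. z + w) -` Q} = (\<lambda>x. x + fst w) -` {x. (x, \<tau>) \<in> Q}" for \<tau>
    using w by (cases w) auto
  from V obtain M where M: "AE \<tau> in lborel. set_integrable lebesgue {x. (x,\<tau>) \<in> Q} (\<lambda>x. (u (x,\<tau>))\<^sup>2) \<and>
      set_lebesgue_integral lebesgue {x. (x,\<tau>) \<in> Q} (\<lambda>x. (u (x,\<tau>))\<^sup>2) \<le> M"
    unfolding Vspace_def by blast
  have "AE \<tau> in lborel.
      set_integrable lebesgue {x. (x,\<tau>) \<in> (\<lambda>z. z + w) -` Q} (\<lambda>x. (u ((x,\<tau>) + w))\<^sup>2) \<and>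
      set_lebesgue_integral lebesgue {x. (x,\<tau>) \<in> (\<lambda>z. z + w) -` Q} (\<lambda>x. (u ((x,\<tau>) + w))\<^sup>2) \<le> M"
    using M
  proof eventually_elim
    case (elim \<tau>)
    have f: "(\<lambda>x. (u ((x,\<tau>) + w))\<^sup>2) = (\<lambda>x. (u (x + fst w,\<tau>))\<^sup>2)"
      using w by (simp add: plus_prod_def)
    have slice_integrable: "set_integrable lebesgue {x. (x,\<tau>) \<in> (\<lambda>z. z + w) -` Q} (\<lambda>x. (u ((x,\<tau>) + w))\<^sup>2) =
        set_integrable lebesgue {x. (x,\<tau>) \<in> Q} (\<lambda>x. (u (x,\<tau>))\<^sup>2)"
      unfolding slice f by (rule set_integrable_lebesgue_translate_iff)
    have slice_integral: "set_lebesgue_integral lebesgue {x. (x,\<tau>) \<in> (\<lambda>z. z + w) -` Q} (\<lambda>x. (u ((x,\<tau>) + w))\<^sup>2) =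
        set_lebesgue_integral lebesgue {x. (x,\<tau>) \<in> Q} (\<lambda>x. (u (x,\<tau>))\<^sup>2)"
      unfolding slice f by (rule set_integral_lebesgue_translate)
    show ?case
      unfolding slice_integrable slice_integral by (rule elim)
  qed
  moreover have "set_integrable lebesgue ((\<lambda>z. z + w) -` Q) (\<lambda>z. (norm (Du (z + w)))\<^sup>2)"
    using V set_integrable_lebesgue_translate_iff[of w Q "\<lambda>z. (norm (Du z))\<^sup>2"]
    unfolding Vspace_def by simp
  moreover have "set_borel_measurable lebesgue ((\<lambda>z. z + w) -` Q) (\<lambda>z. u (z + w))"
    and "set_borel_measurable lebesgue ((\<lambda>z. z + w) -` Q) (\<lambda>z. Du (z + w))"
    and "weak_grad ((\<lambda>z. z + w) -` Q) (\<lambda>z. u (z + w)) (\<lambda>z. Du (z + w))"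
    using V set_borel_measurable_lebesgue_translate weak_grad_translate
    unfolding Vspace_def by blast+
  ultimately show ?thesis
    unfolding Vspace_def by blast
qed

lemma slice_borel:
  fixes S :: "('a::topological_space \<times> 'b::topological_space) set"
  assumes "S \<in> sets borel"
  shows "{x. (x, \<tau>) \<in> S} \<in> sets borel"
proof -
  have "(\<lambda>x. (x, \<tau>)) \<in> borel_measurable borel"
    by (intro borel_measurable_continuous_onI continuous_intros)
  from measurable_sets[OF this assms] show ?thesis
    by (simp add: vimage_def)
qed

lemma Vspace_subset:
  assumes V: "Vspace Q u Du" and sub: "Q' \<subseteq> Q" and borel: "Q' \<in> sets borel"
  shows "Vspace Q' u Du"
proof -
  have meas: "Q' \<in> sets lebesgue" "{x. (x, \<tau>) \<in> Q'} \<in> sets lebesgue" for \<tau>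
    using borel slice_borel[OF borel] by (simp_all add: sets_completionI_sets)
  from V obtain M where M: "AE \<tau> in lborel. set_integrable lebesgue {x. (x,\<tau>) \<in> Q} (\<lambda>x. (u (x,\<tau>))\<^sup>2) \<and>
      set_lebesgue_integral lebesgue {x. (x,\<tau>) \<in> Q} (\<lambda>x. (u (x,\<tau>))\<^sup>2) \<le> M"
    unfolding Vspace_def by blast
  have "AE \<tau> in lborel. set_integrable lebesgue {x. (x,\<tau>) \<in> Q'} (\<lambda>x. (u (x,\<tau>))\<^sup>2) \<and>
      set_lebesgue_integral lebesgue {x. (x,\<tau>) \<in> Q'} (\<lambda>x. (u (x,\<tau>))\<^sup>2) \<le> M"
    using M
  proof eventually_elim
    case (elim \<tau>)
    have slice_sub: "{x. (x,\<tau>) \<in> Q'} \<subseteq> {x. (x,\<tau>) \<in> Q}"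
      using sub by auto
    have integrable: "set_integrable lebesgue {x. (x,\<tau>) \<in> Q'} (\<lambda>x. (u (x,\<tau>))\<^sup>2)"
      using set_integrable_subset[OF conjunct1[OF elim] meas(2) slice_sub] .
    have "set_lebesgue_integral lebesgue {x. (x,\<tau>) \<in> Q'} (\<lambda>x. (u (x,\<tau>))\<^sup>2)
        \<le> set_lebesgue_integral lebesgue {x. (x,\<tau>) \<in> Q} (\<lambda>x. (u (x,\<tau>))\<^sup>2)"
      unfolding set_lebesgue_integral_def
      using integrable conjunct1[OF elim] slice_sub unfolding set_integrable_def
      by (intro integral_mono) (auto simp: indicator_def)
    then show ?case
      using integrable elim by simp
  qed
  moreover have "set_borel_measurable lebesgue Q' u" "set_borel_measurable lebesgue Q' Du"
    "set_integrable lebesgue Q' (\<lambda>z. (norm (Du z))\<^sup>2)" "weak_grad Q' u Du"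
    using V set_borel_measurable_subset[OF _ meas(1) sub] set_integrable_subset[OF _ meas(1) sub]
      weak_grad_subset[OF _ sub]
    unfolding Vspace_def by blast+
  ultimately show ?thesis
    unfolding Vspace_def by blast
qed

section \<open>Coordinates and cylinders\<close>

lemma xp_add: "xp I (x + y) = xp I x + xp I y"
  by (simp add: xp_def vec_eq_iff)

lemma xp_diff: "xp I (x - y) = xp I x - xp I y"
  by (simp add: xp_def vec_eq_iff)

lemma xpp_add: "xpp I (x + y) = xpp I x + xpp I y"
  by (simp add: xpp_def vec_eq_iff)

lemma xpp_diff: "xpp I (x - y) = xpp I x - xpp I y"
  by (simp add: xpp_def vec_eq_iff)

lemma xp_add_xpp: "xp I x + xpp I x = x"
  by (simp add: xp_def xpp_def vec_eq_iff)

lemma xp_xpp: "xp I (xpp I x) = 0"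
  by (simp add: xp_def xpp_def vec_eq_iff)

lemma xpp_xpp: "xpp I (xpp I x) = xpp I x"
  by (simp add: xpp_def vec_eq_iff)

lemma continuous_on_xp [continuous_intros]:
  "continuous_on S f \<Longrightarrow> continuous_on S (\<lambda>x. xp I (f x))"
  unfolding xp_def
proof (intro continuous_intros)
  fix i
  assume "continuous_on S f"
  then show "continuous_on S (\<lambda>x. if i \<in> I then f x $ i else 0)"
    by (cases "i \<in> I") (simp_all add: continuous_on_component)
qed

lemma continuous_on_xpp [continuous_intros]:
  "continuous_on S f \<Longrightarrow> continuous_on S (\<lambda>x. xpp I (f x))"
  unfolding xpp_def
proof (intro continuous_intros)
  fix i
  assume "continuous_on S f"
  then show "continuous_on S (\<lambda>x. if i \<in> I then 0 else f x $ i)"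
    by (cases "i \<in> I") (simp_all add: continuous_on_component)
qed

lemma cylF_borel: "cylF I R t0 \<in> sets borel"
proof -
  have "cylF I R t0 = {z. norm (xp I (fst z)) < R} \<inter> {z. norm (xpp I (fst z)) < R} \<inter>
      {z. t0 - R\<^sup>2 < snd z} \<inter> {z. snd z \<le> t0}"
    by (auto simp: cylF_def)
  moreover have "open {z::(real^'a) \<times> real. norm (xp I (fst z)) < R}"
    "open {z::(real^'a) \<times> real. norm (xpp I (fst z)) < R}"
    "open {z::(real^'a) \<times> real. t0 - R\<^sup>2 < snd z}"
    by (intro open_Collect_less continuous_intros)+
  moreover have "closed {z::(real^'a) \<times> real. snd z \<le> t0}"
    by (intro closed_Collect_le continuous_intros)
  ultimately show ?thesis
    by (metis borel_closed borel_open sets.Int)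
qed

lemma cylK_borel:
  assumes "open_cone I K"
  shows "cylK I K R t0 \<in> sets borel"
proof -
  from assms obtain U where U: "open U" "K = subsp I \<inter> U"
    by (auto simp: open_cone_def openin_open)
  have "xp I x \<in> subsp I" for x
    by (simp add: xp_def subsp_def)
  then have "cylK I K R t0 = cylF I R t0 \<inter> {z. xp I (fst z) \<in> U}"
    by (auto simp: cylK_def cylF_def U(2))
  moreover have "open {z::(real^'a) \<times> real. xp I (fst z) \<in> U}"
    using open_vimage[OF U(1), of "\<lambda>z::(real^'a) \<times> real. xp I (fst z)"]
    by (simp add: vimage_def continuous_intros)
  ultimately show ?thesis
    using cylF_borel by (metis borel_open sets.Int)
qed

lemma cylK_mono: "\<rho>' \<le> \<rho> \<Longrightarrow> 0 \<le> \<rho>' \<Longrightarrow> cylK I K \<rho>' s \<subseteq> cylK I K \<rho> s"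
proof -
  assume "\<rho>' \<le> \<rho>" "0 \<le> \<rho>'"
  moreover from this have "\<rho>'\<^sup>2 \<le> \<rho>\<^sup>2"
    by (intro power_mono) auto
  ultimately show ?thesis
    by (auto simp: cylK_def) (use \<open>\<rho>'\<^sup>2 \<le> \<rho>\<^sup>2\<close> in linarith)+
qed

lemma cylF_mono: "\<rho>' \<le> \<rho> \<Longrightarrow> 0 \<le> \<rho>' \<Longrightarrow> cylF I \<rho>' s \<subseteq> cylF I \<rho> s"
proof -
  assume "\<rho>' \<le> \<rho>" "0 \<le> \<rho>'"
  moreover from this have "\<rho>'\<^sup>2 \<le> \<rho>\<^sup>2"
    by (intro power_mono) auto
  ultimately show ?thesis
    by (auto simp: cylF_def) (use \<open>\<rho>'\<^sup>2 \<le> \<rho>\<^sup>2\<close> in linarith)+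
qed

lemma cylF_translate_subset:
  assumes y: "xp I y = 0" and r: "norm y + \<rho> \<le> r" and s: "s \<le> t0" "t0 - r\<^sup>2 \<le> s - \<rho>\<^sup>2"
    and z: "z \<in> cylF I \<rho> s"
  shows "z + (y, 0) \<in> cylF I r t0"
proof -
  obtain x t where zxt: "z = (x, t)"
    by (cases z)
  have h: "norm (xp I x) < \<rho>" "norm (xpp I x) < \<rho>" "s - \<rho>\<^sup>2 < t" "t \<le> s"
    using z by (auto simp: cylF_def zxt)
  have "xpp I y = y"
    using xp_add_xpp[of I y] y by simp
  then have "norm (xpp I (x + y)) \<le> norm (xpp I x) + norm y"
    by (simp add: xpp_add norm_triangle_ineq)
  moreover have "norm (xp I x) < r"
    using h(1) r norm_ge_zero[of y] by linarith
  ultimately show ?thesis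
    using h r s by (auto simp: cylF_def zxt xp_add y)
qed

lemma cylK_translate_subset:
  assumes "xp I y = 0" "norm y + \<rho> \<le> r" "s \<le> t0" "t0 - r\<^sup>2 \<le> s - \<rho>\<^sup>2"
    and z: "z \<in> cylK I K \<rho> s"
  shows "z + (y, 0) \<in> cylK I K r t0"
proof -
  have "z \<in> cylF I \<rho> s" "xp I (fst z) \<in> K"
    using z by (auto simp: cylF_def cylK_def)
  with cylF_translate_subset[OF assms(1-4)] show ?thesis
    by (auto simp: cylF_def cylK_def xp_add assms(1))
qed

section \<open>Solutions translated in \<open>x''\<close>\<close>

lemma weak_equation_translate:
  fixes w :: "(real^'n) \<times> real"
  assumes eq: "\<And>\<phi> g. test_fun (interior Q) \<phi> g \<Longrightarrow> set_lebesgue_integral lebesgue Q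
      (\<lambda>z. - u z * snd (g z) + (A (snd z) *v Du z) \<bullet> fst (g z)) = 0"
    and w: "snd w = 0" and sub: "\<And>z. z \<in> Q' \<Longrightarrow> z + w \<in> Q"
    and t: "test_fun (interior Q') \<phi> g"
  shows "set_lebesgue_integral lebesgue Q'
      (\<lambda>z. - u (z + w) * snd (g z) + (A (snd z) *v Du (z + w)) \<bullet> fst (g z)) = 0"
proof -
  let ?F = "\<lambda>z. - u z * snd (g (z - w)) + (A (snd z) *v Du z) \<bullet> fst (g (z - w))"
  have t': "test_fun ((\<lambda>z. z - w) -` interior Q') (\<lambda>z. \<phi> (z - w)) (\<lambda>z. g (z - w))"
    using test_fun_translate[OF t, of "-w"] by simp
  have img: "(\<lambda>z. z - w) -` X = (+) w ` X" for X
    using translate_vimage_eq_image[of "-w" X] by simp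
  have "(+) w ` Q' \<subseteq> Q"
    using sub by (auto simp: add.commute)
  then have "(\<lambda>z. z - w) -` interior Q' \<subseteq> interior Q"
    unfolding img interior_translation[symmetric] by (rule interior_mono)
  then have "set_lebesgue_integral lebesgue Q ?F = 0"
    using eq test_fun_mono[OF t'] by blast
  moreover have supp: "closure {z. \<phi> (z - w) \<noteq> 0} \<subseteq> (\<lambda>z. z - w) -` Q'"
    using t' interior_subset[of Q'] unfolding test_fun_def by blast
  have "set_lebesgue_integral lebesgue Q ?F = set_lebesgue_integral lebesgue ((\<lambda>z. z - w) -` Q') ?F"
  proof (rule set_integral_cong_support[where C="closure {z. \<phi> (z - w) \<noteq> 0}"])
    fix z
    assume "z \<notin> closure {z. \<phi> (z - w) \<noteq> 0}"
    from test_fun_grad_eq_0[OF t' this] show "?F z = 0"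
      by simp
  next
    show "closure {z. \<phi> (z - w) \<noteq> 0} \<subseteq> Q"
    proof
      fix z
      assume "z \<in> closure {z. \<phi> (z - w) \<noteq> 0}"
      then have "z - w \<in> Q'"
        using supp by auto
      from sub[OF this] show "z \<in> Q"
        by simp
    qed
  qed (rule supp)
  moreover have "set_lebesgue_integral lebesgue ((\<lambda>z. z - w) -` Q') ?F =
      set_lebesgue_integral lebesgue Q'
        (\<lambda>z. - u (z + w) * snd (g z) + (A (snd z) *v Du (z + w)) \<bullet> fst (g z))"
    using set_integral_lebesgue_translate[of "-w" Q' "\<lambda>z. ?F (z + w)"] w by simp
  ultimately show ?thesis
    by simp
qed

lemma sol_translate:
  fixes y :: "real^'n"
  assumes S: "sol I K A R t0 u Du" and cone: "open_cone I K"
    and y: "xp I y = 0" and R': "0 < R'" "R' < R"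
    and incK: "\<And>z. z \<in> cylK I K \<rho> s \<Longrightarrow> z + (y, 0) \<in> cylK I K R' t0"
    and incF: "\<And>z. z \<in> cylF I \<rho> s \<Longrightarrow> z + (y, 0) \<in> cylF I R' t0"
  shows "sol I K A \<rho> s (\<lambda>z. u (z + (y, 0))) (\<lambda>z. Du (z + (y, 0)))"
  unfolding sol_def
proof (intro conjI allI impI)
  fix \<rho>'
  assume \<rho>': "0 < \<rho>' \<and> \<rho>' < \<rho>"
  have VK: "Vspace (cylK I K R' t0) u Du"
    and VF: "Vspace (cylF I R' t0) (\<lambda>z. if xp I (fst z) \<in> K then u z else 0)
      (\<lambda>z. if xp I (fst z) \<in> K then Du z else 0)"
    using S R' unfolding sol_def by blast+
  show "Vspace (cylK I K \<rho>' s) (\<lambda>z. u (z + (y, 0))) (\<lambda>z. Du (z + (y, 0)))"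
  proof (rule Vspace_subset[OF Vspace_translate[OF VK]])
    show "cylK I K \<rho>' s \<subseteq> (\<lambda>z. z + (y, 0)) -` cylK I K R' t0"
      using cylK_mono[of \<rho>' \<rho>] \<rho>' incK by fastforce
  qed (auto intro: cylK_borel cone)
  have "Vspace ((\<lambda>z. z + (y, 0)) -` cylF I R' t0)
      (\<lambda>z. if xp I (fst z) \<in> K then u (z + (y, 0)) else 0)
      (\<lambda>z. if xp I (fst z) \<in> K then Du (z + (y, 0)) else 0)"
    using Vspace_translate[OF VF, of "(y, 0)"] by (simp add: xp_add y)
  then show "Vspace (cylF I \<rho>' s) (\<lambda>z. if xp I (fst z) \<in> K then u (z + (y, 0)) else 0)
      (\<lambda>z. if xp I (fst z) \<in> K then Du (z + (y, 0)) else 0)"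
  proof (rule Vspace_subset)
    show "cylF I \<rho>' s \<subseteq> (\<lambda>z. z + (y, 0)) -` cylF I R' t0"
      using cylF_mono[of \<rho>' \<rho>] \<rho>' incF by fastforce
  qed (auto intro: cylF_borel)
next
  fix \<phi> g
  assume "test_fun (interior (cylK I K \<rho> s)) \<phi> g"
  moreover have "z + (y, 0) \<in> cylK I K R t0" if "z \<in> cylK I K \<rho> s" for z
    using incK[OF that] cylK_mono[of R' R] R' by auto
  ultimately show "set_lebesgue_integral lebesgue (cylK I K \<rho> s)
      (\<lambda>z. - u (z + (y, 0)) * snd (g z) + (A (snd z) *v Du (z + (y, 0))) \<bullet> fst (g z)) = 0"
    using S unfolding sol_def
    by (intro weak_equation_translate[where Q="cylK I K R t0"]) auto
qed

section \<open>Changing the parameter of the boundary estimate\<close>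

definition esssup_abs_on :: "((real^'n) \<times> real) set \<Rightarrow> ((real^'n) \<times> real \<Rightarrow> real) \<Rightarrow> ereal"
  where "esssup_abs_on Q u = esssup lebesgue (\<lambda>w. if w \<in> Q then ereal \<bar>u w\<bar> else 0)"

definition boundary_estimate ::
    "'n set \<Rightarrow> (real^'n) set \<Rightarrow> (real \<Rightarrow> real^'n^'n) \<Rightarrow> real \<Rightarrow> real \<Rightarrow> real \<Rightarrow> bool"
  where "boundary_estimate I K A \<kappa> lam C \<longleftrightarrow> (\<forall>t0 R u Du. 0 < R \<and> sol I K A R t0 u Du \<longrightarrow>
    (AE z in lebesgue. z \<in> cylK I K (R/2) t0 \<longrightarrow>
      ereal \<bar>u z\<bar> \<le> ereal (C * (norm (xp I (fst z)) / R) powr lam) *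
        esssup_abs_on (cylK I K (\<kappa> * R) t0) u))"

lemma holds_est_iff_boundary_estimate:
  "holds_est I K A \<kappa> lam \<longleftrightarrow> (\<exists>C. boundary_estimate I K A \<kappa> lam C)"
  unfolding holds_est_def boundary_estimate_def esssup_abs_on_def ..

lemma esssup_abs_on_nonneg:
  fixes Q :: "((real^'n) \<times> real) set"
  shows "0 \<le> esssup_abs_on Q u"
proof -
  have "emeasure lebesgue (space lebesgue :: ((real^'n) \<times> real) set) \<noteq> 0"
    by (simp add: emeasure_completion)
  then have "esssup lebesgue (\<lambda>x::(real^'n) \<times> real. 0::ereal) = 0"
    by (rule esssup_const)
  moreover have "esssup lebesgue (\<lambda>x::(real^'n) \<times> real. 0::ereal) \<le> esssup_abs_on Q u"
    unfolding esssup_abs_on_def by (rule esssup_mono) auto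
  ultimately show ?thesis
    by simp
qed

lemma AE_abs_le_esssup_abs_on:
  "AE z in lebesgue. z \<in> Q \<longrightarrow> ereal \<bar>u z\<bar> \<le> esssup_abs_on Q u"
  using esssup_AE[where M=lebesgue and f="\<lambda>w. if w \<in> Q then ereal \<bar>u w\<bar> else 0"]
  unfolding esssup_abs_on_def by (rule eventually_mono) auto

lemma esssup_abs_on_translate_le:
  assumes meas: "set_borel_measurable lebesgue Q (\<lambda>z. u (z + w))"
    and sub: "\<And>z. z \<in> Q \<Longrightarrow> z + w \<in> Q'"
  shows "esssup_abs_on Q (\<lambda>z. u (z + w)) \<le> esssup_abs_on Q' u"
proof -
  have "(\<lambda>z. if z \<in> Q then ereal \<bar>u (z + w)\<bar> else 0) = (\<lambda>z. ereal \<bar>indicator Q z *\<^sub>R u (z + w)\<bar>)"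
    by (auto simp: indicator_def)
  then have "(\<lambda>z. if z \<in> Q then ereal \<bar>u (z + w)\<bar> else 0) \<in> borel_measurable lebesgue"
    using meas unfolding set_borel_measurable_def by simp
  moreover have "AE z in lebesgue. (if z \<in> Q then ereal \<bar>u (z + w)\<bar> else 0) \<le> esssup_abs_on Q' u"
    using AE_lebesgue_translate[OF AE_abs_le_esssup_abs_on[of Q' u], of w]
    by eventually_elim (use sub esssup_abs_on_nonneg in auto)
  ultimately show ?thesis
    unfolding esssup_abs_on_def[of Q] by (rule esssup_I)
qed

lemma null_sets_time_slice: "{z::(real^'n) \<times> real. snd z = t0} \<in> null_sets lebesgue"
proof -
  have "{z::(real^'n) \<times> real. snd z = t0} = {z. (0, 1) \<bullet> z = t0}"
    by (auto simp: inner_prod_def)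
  moreover have "negligible {z::(real^'n) \<times> real. (0, 1) \<bullet> z = t0}"
    by (rule negligible_hyperplane) (simp add: zero_prod_def)
  ultimately show ?thesis
    by (simp add: negligible_iff_null_sets)
qed

lemma boundary_estimate_max_0:
  assumes "boundary_estimate I K A \<kappa> lam C"
  shows "boundary_estimate I K A \<kappa> lam (max C 0)"
  unfolding boundary_estimate_def
proof (intro allI impI)
  fix t0 R u Du
  assume "0 < R \<and> sol I K A R t0 u Du"
  with assms have "AE z in lebesgue. z \<in> cylK I K (R/2) t0 \<longrightarrow>
      ereal \<bar>u z\<bar> \<le> ereal (C * (norm (xp I (fst z)) / R) powr lam) *
        esssup_abs_on (cylK I K (\<kappa> * R) t0) u"
    unfolding boundary_estimate_def by blast
  then show "AE z in lebesgue. z \<in> cylK I K (R/2) t0 \<longrightarrow>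
      ereal \<bar>u z\<bar> \<le> ereal (max C 0 * (norm (xp I (fst z)) / R) powr lam) *
        esssup_abs_on (cylK I K (\<kappa> * R) t0) u"
  proof eventually_elim
    case (elim z)
    have "ereal (C * (norm (xp I (fst z)) / R) powr lam) * esssup_abs_on (cylK I K (\<kappa> * R) t0) u
        \<le> ereal (max C 0 * (norm (xp I (fst z)) / R) powr lam) * esssup_abs_on (cylK I K (\<kappa> * R) t0) u"
      by (intro ereal_mult_right_mono esssup_abs_on_nonneg) (simp add: mult_right_mono)
    with elim show ?case
      by (blast intro: order.trans)
  qed
qed

lemma powr_ge_min_endpoints:
  fixes a b p lam :: real
  assumes "0 < a" "a \<le> p" "p \<le> b"
  shows "min (a powr lam) (b powr lam) \<le> p powr lam"
proof (cases "0 \<le> lam")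
  case True
  then have "a powr lam \<le> p powr lam"
    using assms by (intro powr_mono2) auto
  then show ?thesis
    by simp
next
  case False
  then have "b powr lam \<le> p powr lam"
    using assms by (intro powr_mono2') auto
  then show ?thesis
    by simp
qed

lemma transfer_constant_bounds:
  fixes c C R p lam :: real
  assumes c: "0 < c" and C: "0 \<le> C" and R: "0 < R" and p: "0 \<le> p" "p < R / 2"
  defines "C' \<equiv> max (C * c powr (-lam)) (1 / min ((c/2) powr lam) ((1/2) powr lam))"
  shows "c * R / 2 \<le> p \<Longrightarrow> 1 \<le> C' * (p / R) powr lam"
    and "C * (p / (c * R)) powr lam \<le> C' * (p / R) powr lam"
proof -
  let ?m = "min ((c/2) powr lam) ((1/2) powr lam)"
  have m: "0 < ?m"
    using c by simp
  assume "c * R / 2 \<le> p"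
  then have le_powr: "?m \<le> (p / R) powr lam"
    using c R p by (intro powr_ge_min_endpoints) (auto simp: field_simps)
  have le_C': "1 / ?m \<le> C'"
    by (simp add: C'_def)
  moreover have "0 < 1 / ?m"
    using m by simp
  ultimately have "0 \<le> C'"
    by linarith
  with le_C' le_powr m have "(1 / ?m) * ?m \<le> C' * (p / R) powr lam"
    by (intro mult_mono) auto
  then show "1 \<le> C' * (p / R) powr lam"
    using m by simp
next
  have "(p / (c * R)) powr lam = (p / R) powr lam * (1 / c) powr lam"
    using c R p by (simp add: powr_mult[symmetric] field_simps)
  also have "\<dots> = c powr (-lam) * (p / R) powr lam"
    using c by (simp add: powr_divide powr_minus_divide)
  finally have "C * (p / (c * R)) powr lam = (C * c powr (-lam)) * (p / R) powr lam"
    by simp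
  also have "\<dots> \<le> C' * (p / R) powr lam"
    by (intro mult_right_mono) (auto simp: C'_def)
  finally show "C * (p / (c * R)) powr lam \<le> C' * (p / R) powr lam" .
qed

lemma boundary_estimate_translate:
  assumes est: "boundary_estimate I K A \<kappa> lam C" and C: "0 \<le> C"
    and S: "sol I K A R t0 u Du" and cone: "open_cone I K"
    and \<kappa>: "0 < \<kappa>" "\<kappa> < 1" and \<rho>: "0 < \<rho>" and R': "0 < R'" "R' < R"
    and y: "xp I y = 0"
    and incK: "\<And>z. z \<in> cylK I K \<rho> s \<Longrightarrow> z + (y, 0) \<in> cylK I K R' t0"
    and incF: "\<And>z. z \<in> cylF I \<rho> s \<Longrightarrow> z + (y, 0) \<in> cylF I R' t0"
  shows "AE z in lebesgue. z - (y, 0) \<in> cylK I K (\<rho>/2) s \<longrightarrow>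
    ereal \<bar>u z\<bar> \<le> ereal (C * (norm (xp I (fst z)) / \<rho>) powr lam) * esssup_abs_on (cylK I K R' t0) u"
proof -
  let ?u = "\<lambda>z. u (z + (y, 0))"
  let ?E = "esssup_abs_on (cylK I K R' t0) u"
  let ?E\<rho> = "esssup_abs_on (cylK I K (\<kappa> * \<rho>) s) ?u"
  have S\<rho>: "sol I K A \<rho> s ?u (\<lambda>z. Du (z + (y, 0)))"
    by (rule sol_translate[OF S cone y R' incK incF])
  have "?E\<rho> \<le> ?E"
  proof (rule esssup_abs_on_translate_le)
    have "Vspace (cylK I K (\<kappa> * \<rho>) s) ?u (\<lambda>z. Du (z + (y, 0)))"
      using S\<rho> \<kappa> \<rho> unfolding sol_def by auto
    then show "set_borel_measurable lebesgue (cylK I K (\<kappa> * \<rho>) s) ?u"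
      unfolding Vspace_def by blast
    show "z + (y, 0) \<in> cylK I K R' t0" if "z \<in> cylK I K (\<kappa> * \<rho>) s" for z
    proof (rule incK)
      show "z \<in> cylK I K \<rho> s"
        using that cylK_mono[of "\<kappa> * \<rho>" \<rho> I K s] \<kappa> \<rho> by auto
    qed
  qed
  have "AE z in lebesgue. z \<in> cylK I K (\<rho>/2) s \<longrightarrow>
      ereal \<bar>?u z\<bar> \<le> ereal (C * (norm (xp I (fst z)) / \<rho>) powr lam) * ?E\<rho>"
    using est S\<rho> \<rho> unfolding boundary_estimate_def by blast
  from AE_lebesgue_translate[OF this, of "- (y, 0)"]
  show ?thesis
  proof eventually_elim
    case (elim z)
    have shift: "z + - (y, 0) = z - (y, 0)" "z - (y, 0) + (y, 0) = z"
      by simp_all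
    have "xp I (fst (z - (y, 0))) = xp I (fst z)"
      by (simp add: xp_diff y)
    with elim have "z - (y, 0) \<in> cylK I K (\<rho>/2) s \<longrightarrow>
        ereal \<bar>u z\<bar> \<le> ereal (C * (norm (xp I (fst z)) / \<rho>) powr lam) * ?E\<rho>"
      unfolding shift by simp
    moreover have "ereal (C * (norm (xp I (fst z)) / \<rho>) powr lam) * ?E\<rho>
        \<le> ereal (C * (norm (xp I (fst z)) / \<rho>) powr lam) * ?E"
      using \<open>?E\<rho> \<le> ?E\<close> C by (intro ereal_mult_left_mono) auto
    ultimately show ?case
      by (blast intro: order.trans)
  qed
qed

lemma exists_dense_center:
  fixes D :: "((real^'n) \<times> real) set"
  assumes dense: "\<And>X. open X \<Longrightarrow> X \<noteq> {} \<Longrightarrow> \<exists>d\<in>D. d \<in> X"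
    and z: "(x, t) \<in> cylK I K (R/2) t0" "t < t0" and near: "norm (xp I x) < \<rho>/2"
    and \<rho>: "0 < \<rho>" "R/2 + 3/2 * \<rho> \<le> \<kappa> * R" "\<rho>\<^sup>2 \<le> (\<kappa>\<^sup>2 - 1/4) * R\<^sup>2"
  obtains d where "d \<in> D" "norm (xpp I (fst d)) + \<rho> \<le> \<kappa> * R" "snd d \<le> t0"
    "t0 - (\<kappa> * R)\<^sup>2 \<le> snd d - \<rho>\<^sup>2" "(x, t) - (xpp I (fst d), 0) \<in> cylK I K (\<rho>/2) (snd d)"
proof -
  have h: "xp I x \<in> K" "norm (xpp I x) < R/2" "t0 - (R/2)\<^sup>2 < t"
    using z by (auto simp: cylK_def)
  define X where "X = {d::(real^'n) \<times> real. norm (xpp I x - xpp I (fst d)) < \<rho>/2 \<and>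
    t < snd d \<and> snd d < min t0 (t + (\<rho>/2)\<^sup>2)}"
  have "open X"
    unfolding X_def by (intro open_Collect_conj open_Collect_less continuous_intros)
  moreover have "(x, (t + min t0 (t + (\<rho>/2)\<^sup>2)) / 2) \<in> X"
    using z \<rho> by (auto simp: X_def min_def)
  ultimately obtain d where "d \<in> D" "d \<in> X"
    using dense by blast
  then have d: "norm (xpp I x - xpp I (fst d)) < \<rho>/2" "t < snd d" "snd d < t0"
    "snd d < t + (\<rho>/2)\<^sup>2"
    by (auto simp: X_def)
  show ?thesis
  proof (rule that[OF \<open>d \<in> D\<close>])
    have "norm (xpp I (fst d)) \<le> norm (xpp I x) + norm (xpp I x - xpp I (fst d))"
      using norm_triangle_sub[of "xpp I (fst d)" "xpp I x"] by (simp add: norm_minus_commute)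
    then show "norm (xpp I (fst d)) + \<rho> \<le> \<kappa> * R"
      using h(2) d(1) \<rho>(2) by linarith
    show "snd d \<le> t0"
      using d(3) by simp
    show "t0 - (\<kappa> * R)\<^sup>2 \<le> snd d - \<rho>\<^sup>2"
    proof -
      have "(\<kappa>\<^sup>2 - 1/4) * R\<^sup>2 = (\<kappa> * R)\<^sup>2 - (R/2)\<^sup>2"
        by (simp add: power2_eq_square algebra_simps)
      then show ?thesis
        using h(3) d(2) \<rho>(3) by linarith
    qed
    show "(x, t) - (xpp I (fst d), 0) \<in> cylK I K (\<rho>/2) (snd d)"
      using h(1) near d z(1) by (simp add: cylK_def xp_diff xp_xpp xpp_diff xpp_xpp)
  qed
qed

lemma AE_boundary_estimate_translates:
  fixes I :: "'n::finite set" and centers :: "((real^'n) \<times> real) set"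
  assumes est: "boundary_estimate I K A \<kappa> lam C" and C: "0 \<le> C"
    and S: "sol I K A R t0 u Du" and cone: "open_cone I K"
    and \<kappa>: "0 < \<kappa>" "\<kappa> < 1" and \<rho>: "0 < \<rho>" and R': "0 < R'" "R' < R"
    and countable: "countable centers"
    and centers: "\<And>d. d \<in> centers \<Longrightarrow>
      norm (xpp I (fst d)) + \<rho> \<le> R' \<and> snd d \<le> t0 \<and> t0 - R'\<^sup>2 \<le> snd d - \<rho>\<^sup>2"
  shows "AE z in lebesgue. \<forall>d\<in>centers. z - (xpp I (fst d), 0) \<in> cylK I K (\<rho>/2) (snd d) \<longrightarrow>
    ereal \<bar>u z\<bar> \<le> ereal (C * (norm (xp I (fst z)) / \<rho>) powr lam) * esssup_abs_on (cylK I K R' t0) u"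
  unfolding AE_ball_countable[OF countable]
proof
  fix d
  assume "d \<in> centers"
  then have y: "xp I (xpp I (fst d)) = 0" "norm (xpp I (fst d)) + \<rho> \<le> R'" "snd d \<le> t0"
    "t0 - R'\<^sup>2 \<le> snd d - \<rho>\<^sup>2"
    using centers by (simp_all add: xp_xpp)
  show "AE z in lebesgue. z - (xpp I (fst d), 0) \<in> cylK I K (\<rho>/2) (snd d) \<longrightarrow>
      ereal \<bar>u z\<bar> \<le> ereal (C * (norm (xp I (fst z)) / \<rho>) powr lam) * esssup_abs_on (cylK I K R' t0) u"
    by (rule boundary_estimate_translate[OF est C S cone \<kappa> \<rho> R' y(1)
          cylK_translate_subset[OF y] cylF_translate_subset[OF y]])
qed

lemma boundary_bound_at_point:
  fixes D :: "((real^'n) \<times> real) set" and E :: ereal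
  assumes dense: "\<And>X. open X \<Longrightarrow> X \<noteq> {} \<Longrightarrow> \<exists>d\<in>D. d \<in> X"
    and c: "0 < c" "R/2 + 3/2 * (c * R) \<le> \<kappa> * R" "(c * R)\<^sup>2 \<le> (\<kappa>\<^sup>2 - 1/4) * R\<^sup>2"
    and C: "0 \<le> C" and R: "0 < R"
    and z: "(x, t) \<in> cylK I K (R/2) t0" "t \<noteq> t0"
    and E: "0 \<le> E" "ereal \<bar>u (x, t)\<bar> \<le> E"
    and translates: "\<And>d. d \<in> D \<Longrightarrow> norm (xpp I (fst d)) + c * R \<le> \<kappa> * R \<Longrightarrow> snd d \<le> t0 \<Longrightarrow>
      t0 - (\<kappa> * R)\<^sup>2 \<le> snd d - (c * R)\<^sup>2 \<Longrightarrow>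
      (x, t) - (xpp I (fst d), 0) \<in> cylK I K (c * R / 2) (snd d) \<Longrightarrow>
      ereal \<bar>u (x, t)\<bar> \<le> ereal (C * (norm (xp I x) / (c * R)) powr lam) * E"
  shows "ereal \<bar>u (x, t)\<bar> \<le> ereal (max (C * c powr (-lam)) (1 / min ((c/2) powr lam) ((1/2) powr lam)) *
    (norm (xp I x) / R) powr lam) * E"
    (is "_ \<le> ereal (?C' * _) * E")
proof -
  have p: "0 \<le> norm (xp I x)" "norm (xp I x) < R/2"
    using z by (auto simp: cylK_def)
  show ?thesis
  proof (cases "c * R / 2 \<le> norm (xp I x)")
    case True
    have "ereal \<bar>u (x, t)\<bar> \<le> ereal 1 * E"
      using E by simp
    also have "\<dots> \<le> ereal (?C' * (norm (xp I x) / R) powr lam) * E"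
      using transfer_constant_bounds(1)[OF c(1) C R p True, of lam] E(1)
      by (intro ereal_mult_right_mono) simp_all
    finally show ?thesis .
  next
    case False
    have "t < t0"
      using z by (auto simp: cylK_def)
    then obtain d where "d \<in> D" "norm (xpp I (fst d)) + c * R \<le> \<kappa> * R" "snd d \<le> t0"
      "t0 - (\<kappa> * R)\<^sup>2 \<le> snd d - (c * R)\<^sup>2" "(x, t) - (xpp I (fst d), 0) \<in> cylK I K (c * R / 2) (snd d)"
      using exists_dense_center[OF dense z(1) _ _ mult_pos_pos[OF c(1) R] c(2,3)] False by auto
    then have "ereal \<bar>u (x, t)\<bar> \<le> ereal (C * (norm (xp I x) / (c * R)) powr lam) * E"
      by (rule translates)
    also have "\<dots> \<le> ereal (?C' * (norm (xp I x) / R) powr lam) * E"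
      using transfer_constant_bounds(2)[OF c(1) C R p, of lam] E(1)
      by (intro ereal_mult_right_mono) simp_all
    finally show ?thesis .
  qed
qed

lemma shrunk_radius_bounds:
  fixes \<kappa> R :: real
  assumes "1/2 < \<kappa>" "\<kappa> < 1" "0 < R"
  defines "c \<equiv> (\<kappa> - 1/2) / 2"
  shows "0 < c" "R/2 + 3/2 * (c * R) \<le> \<kappa> * R" "(c * R)\<^sup>2 \<le> (\<kappa>\<^sup>2 - 1/4) * R\<^sup>2"
proof -
  show "0 < c"
    using assms by (simp add: c_def)
  have "3/2 * c \<le> \<kappa> - 1/2"
    using assms by (simp add: c_def)
  from mult_right_mono[OF this, of R] assms(3) show "R/2 + 3/2 * (c * R) \<le> \<kappa> * R"
    by (simp add: algebra_simps)
  have "c\<^sup>2 = (\<kappa> - 1/2) * ((\<kappa> - 1/2) / 4)"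
    by (simp add: c_def power2_eq_square)
  also have "\<dots> \<le> (\<kappa> - 1/2) * (\<kappa> + 1/2)"
    using assms by (intro mult_left_mono) auto
  also have "\<dots> = \<kappa>\<^sup>2 - 1/4"
    by (simp add: power2_eq_square algebra_simps)
  finally show "(c * R)\<^sup>2 \<le> (\<kappa>\<^sup>2 - 1/4) * R\<^sup>2"
    by (simp add: power_mult_distrib mult_right_mono)
qed

lemma boundary_estimate_change_kappa:
  fixes I :: "'n::finite set"
  assumes est: "boundary_estimate I K A \<kappa>2 lam C" and C: "0 \<le> C" and cone: "open_cone I K"
    and \<kappa>1: "1/2 < \<kappa>1" "\<kappa>1 < 1" and \<kappa>2: "0 < \<kappa>2" "\<kappa>2 < 1"
  shows "\<exists>C'. boundary_estimate I K A \<kappa>1 lam C'"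
proof -
  define c where "c = (\<kappa>1 - 1/2) / 2"
  let ?C' = "max (C * c powr (-lam)) (1 / min ((c/2) powr lam) ((1/2) powr lam))"
  have c: "0 < c" "R/2 + 3/2 * (c * R) \<le> \<kappa>1 * R" "(c * R)\<^sup>2 \<le> (\<kappa>1\<^sup>2 - 1/4) * R\<^sup>2"
    if "0 < R" for R
    using shrunk_radius_bounds[OF \<kappa>1 that] unfolding c_def by auto
  obtain D :: "((real^'n) \<times> real) set"
    where D: "countable D" "\<And>X. open X \<Longrightarrow> X \<noteq> {} \<Longrightarrow> \<exists>d\<in>D. d \<in> X"
    using countable_dense_exists by blast
  have "boundary_estimate I K A \<kappa>1 lam ?C'"
    unfolding boundary_estimate_def
  proof (intro allI impI)
    fix t0 R u Du
    assume "0 < R \<and> sol I K A R t0 u Du"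
    then have R: "0 < R" and S: "sol I K A R t0 u Du"
      by auto
    let ?E = "esssup_abs_on (cylK I K (\<kappa>1 * R) t0) u"
    let ?centers = "{d \<in> D. norm (xpp I (fst d)) + c * R \<le> \<kappa>1 * R \<and>
      snd d \<le> t0 \<and> t0 - (\<kappa>1 * R)\<^sup>2 \<le> snd d - (c * R)\<^sup>2}"
    have "AE z in lebesgue. \<forall>d\<in>?centers. z - (xpp I (fst d), 0) \<in> cylK I K (c * R / 2) (snd d) \<longrightarrow>
        ereal \<bar>u z\<bar> \<le> ereal (C * (norm (xp I (fst z)) / (c * R)) powr lam) * ?E"
      using \<kappa>1 R c(1)[OF R] D(1)
      by (intro AE_boundary_estimate_translates[OF est C S cone \<kappa>2]) auto
    \<comment> \<open>Centres from \<open>D\<close> lie strictly below \<open>t0\<close>, so the top face is excluded; it is a null set.\<close>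
    moreover have "AE z::(real^'n) \<times> real in lebesgue. snd z \<noteq> t0"
      using AE_not_in[OF null_sets_time_slice] by simp
    moreover note AE_abs_le_esssup_abs_on[of "cylK I K (\<kappa>1 * R) t0" u]
    ultimately show "AE z in lebesgue. z \<in> cylK I K (R/2) t0 \<longrightarrow>
        ereal \<bar>u z\<bar> \<le> ereal (?C' * (norm (xp I (fst z)) / R) powr lam) * ?E"
    proof eventually_elim
      case (elim z)
      obtain x t where z: "z = (x, t)"
        by (cases z)
      show ?case
      proof
        assume "z \<in> cylK I K (R/2) t0"
        moreover from this have "z \<in> cylK I K (\<kappa>1 * R) t0"
          using cylK_mono[of "R/2" "\<kappa>1 * R" I K t0] \<kappa>1 R by auto
        ultimately show "ereal \<bar>u z\<bar> \<le> ereal (?C' * (norm (xp I (fst z)) / R) powr lam) * ?E"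
          using elim unfolding z
          by (intro boundary_bound_at_point[OF D(2) c[OF R] C R]) (auto intro: esssup_abs_on_nonneg)
      qed
    qed
  qed
  then show ?thesis
    by blast
qed

lemma holds_est_change_kappa:
  fixes I :: "'n::finite set"
  assumes "holds_est I K A \<kappa>2 lam" and "open_cone I K"
    and "1/2 < \<kappa>1" "\<kappa>1 < 1" and "0 < \<kappa>2" "\<kappa>2 < 1"
  shows "holds_est I K A \<kappa>1 lam"
proof -
  from assms(1) obtain C where "boundary_estimate I K A \<kappa>2 lam C"
    unfolding holds_est_iff_boundary_estimate by blast
  then have "boundary_estimate I K A \<kappa>2 lam (max C 0)"
    by (rule boundary_estimate_max_0)
  then show ?thesis
    unfolding holds_est_iff_boundary_estimate
    by (rule boundary_estimate_change_kappa) (use assms(2-) in auto)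
qed

lemma lambda_c_kappa_eq:
  fixes I :: "'n::finite set"
  assumes "open_cone I K" and "1/2 < \<kappa>1" "\<kappa>1 < 1" "1/2 < \<kappa>2" "\<kappa>2 < 1"
  shows "lambda_c_kappa I K A \<kappa>1 = lambda_c_kappa I K A \<kappa>2"
proof -
  have "holds_est I K A \<kappa>1 lam \<longleftrightarrow> holds_est I K A \<kappa>2 lam" for lam
    using holds_est_change_kappa[of I K A \<kappa>2 lam \<kappa>1] holds_est_change_kappa[of I K A \<kappa>1 lam \<kappa>2]
      assms by auto
  then show ?thesis
    unfolding lambda_c_kappa_def by simp
qed

theorem lemma1:
  fixes I :: "('n::finite) set" and K :: "(real^'n) set" and A :: "real \<Rightarrow> real^'n^'n"
    and \<nu> \<kappa>1 \<kappa>2 :: real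
  assumes "2 \<le> card I"
    and "open_cone I K" and "C11_cone I K"
    and "coeff_ok \<nu> A"
    and "1/2 < \<kappa>1" and "\<kappa>1 < 1" and "1/2 < \<kappa>2" and "\<kappa>2 < 1"
  shows "lambda_c_kappa I K A \<kappa>1 = lambda_c_kappa I K A \<kappa>2 \<and>
         lambda_c_kappa I K (\<lambda>t. A (- t)) \<kappa>1 = lambda_c_kappa I K (\<lambda>t. A (- t)) \<kappa>2"
  using lambda_c_kappa_eq[OF assms(2,5-8)] by blast

end
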